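(* The number of $\mathbb{F}_q$-linear automorphisms of $\mathbb{F}_{q^m}$ that are fully linear over $\mathbb{F}_{q^m}$ is exactly $m(q^m-1)$.
   Context: $q$ is a prime power (the paper takes $q$ a power of $2$). An $\mathbb{F}_q$-linear automorphism of $\mathbb{F}_{q^m}$ is a bijective $\mathbb{F}_q$-linear map $\varphi:\mathbb{F}_{q^m}\to\mathbb{F}_{q^m}$, applied componentwise to vectors. For an $\mathbb{F}_{q^m}$-linear code $\mathcal{C}\subseteq\mathbb{F}_{q^m}^n$, $\varphi$ is linear on $\mathcal{C}$ if $\varphi(\mathcal{C})=\{\varphi(\bm{c}):\bm{c}\in\mathcal{C}\}$ is an $\mathbb{F}_{q^m}$-linear subspace. $\varphi$ is fully linear over $\mathbb{F}_{q^m}$ if it is linear on every $\mathbb{F}_{q^m}$-linear code of every length $n\ge1$. *)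

theory Defs
  imports Main
begin

text \<open>A subfield K of the ambient field (playing the role of F_q inside F_{q^m}).\<close>
definition is_subfield :: "'a::field set \<Rightarrow> bool" where
  "is_subfield K \<longleftrightarrow> 0 \<in> K \<and> 1 \<in> K \<and>
     (\<forall>x\<in>K. \<forall>y\<in>K. x + y \<in> K \<and> x * y \<in> K) \<and>
     (\<forall>x\<in>K. - x \<in> K) \<and> (\<forall>x\<in>K. x \<noteq> 0 \<longrightarrow> inverse x \<in> K)"

definition lin_aut :: "'a::field set \<Rightarrow> ('a \<Rightarrow> 'a) \<Rightarrow> bool" where
  "lin_aut K phi \<longleftrightarrow> bij phi \<and>
     (\<forall>x y. phi (x + y) = phi x + phi y) \<and>
     (\<forall>c\<in>K. \<forall>x. phi (c * x) = c * phi x)"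

definition lin_code :: "nat \<Rightarrow> 'a::field list set \<Rightarrow> bool" where
  "lin_code n C \<longleftrightarrow> C \<subseteq> {v. length v = n} \<and> replicate n 0 \<in> C \<and>
     (\<forall>u\<in>C. \<forall>v\<in>C. map2 (+) u v \<in> C) \<and>
     (\<forall>a. \<forall>u\<in>C. map ((*) a) u \<in> C)"

definition linear_on_code :: "nat \<Rightarrow> ('a::field \<Rightarrow> 'a) \<Rightarrow> 'a list set \<Rightarrow> bool" where
  "linear_on_code n phi C \<longleftrightarrow> lin_code n (map phi ` C)"

definition fully_linear :: "('a::field \<Rightarrow> 'a) \<Rightarrow> bool" where
  "fully_linear phi \<longleftrightarrow>
     (\<forall>n\<ge>1. \<forall>C. lin_code n C \<longrightarrow> linear_on_code n phi C)"

end

theory Submission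
  imports Defs "HOL-Computational_Algebra.Polynomial" "HOL-Computational_Algebra.Primes"
    "HOL-Number_Theory.Cong" "HOL-Algebra.Multiplicative_Group"
begin

text \<open>
  Linearity on the code \<open>{(x, x a)}\<close> forces \<open>\<phi>(x a) \<phi>(1) = \<phi>(x) \<phi>(a)\<close>, so a fully linear
  F_q-linear automorphism \<open>\<phi>\<close> is \<open>c \<sigma>\<close> with \<open>c = \<phi>(1) \<noteq> 0\<close> and \<open>\<sigma>\<close> a field automorphism fixing
  F_q; conversely every such map sends codes to codes, and the pair \<open>(c, \<sigma>)\<close> is unique.
  The field automorphisms of F_{q^m} fixing F_q are exactly the \<open>m\<close> distinct Frobenius powers
  \<open>x \<mapsto> x^(q^i)\<close>, \<open>i < m\<close>: such an automorphism sends a generator \<open>\<alpha>\<close> of the multiplicative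
  group to a root of \<open>\<Prod>i<m. (X - \<alpha>^(q^i))\<close>, a polynomial over F_q. Additivity of \<open>x \<mapsto> x^q\<close>
  needs \<open>q\<close> to be a power of the characteristic \<open>p\<close>, which holds because an additive subgroup
  grows by the factor \<open>p\<close> whenever an element is adjoined.
\<close>

definition add_subgroup :: "'a::ring_1 set \<Rightarrow> bool" where
  "add_subgroup S \<longleftrightarrow> 0 \<in> S \<and> (\<forall>x\<in>S. \<forall>y\<in>S. x + y \<in> S) \<and> (\<forall>x\<in>S. - x \<in> S)"

lemma add_subgroup_of_nat_mult:
  assumes "add_subgroup S" "x \<in> S"
  shows "of_nat k * x \<in> S"
  by (induction k) (use assms in \<open>auto simp: add_subgroup_def distrib_right\<close>)

lemma add_subgroup_of_nat_mult_cancel: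
  assumes "Factorial_Ring.prime CHAR('a::ring_1)" "add_subgroup S" "of_nat d * x \<in> S" "\<not> CHAR('a) dvd d"
  shows "(x :: 'a) \<in> S"
proof -
  have "coprime d CHAR('a)"
    using prime_imp_coprime[OF assms(1,4)] by (simp add: coprime_commute)
  moreover have "d \<noteq> 0" using assms(4) by (metis dvd_0_right)
  ultimately obtain a b where "d * a = CHAR('a) * b + 1"
    using bezout_nat[of d "CHAR('a)"] by auto
  hence "of_nat (d * a) = (1 :: 'a)" by simp
  hence "of_nat a * (of_nat d * x) = x" by (metis mult.assoc mult.commute mult_1 of_nat_mult)
  with add_subgroup_of_nat_mult[OF assms(2,3), of a] show ?thesis by simp
qed

lemma of_nat_mod_CHAR: "of_nat (n mod CHAR('a)) = (of_nat n :: 'a::semiring_1_cancel)"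
  by (simp add: of_nat_eq_iff_cong_CHAR cong_def)

lemma add_subgroup_extend:
  fixes x :: "'a::ring_1"
  assumes p: "Factorial_Ring.prime CHAR('a)" and S: "add_subgroup S" and x: "x \<notin> S"
  defines "f \<equiv> \<lambda>(s, j). s + of_nat j * x"
  shows "add_subgroup (f ` (S \<times> {..<CHAR('a)}))" and "inj_on f (S \<times> {..<CHAR('a)})"
proof -
  let ?p = "CHAR('a)" and ?T = "f ` (S \<times> {..<CHAR('a)})"
  have p1: "?p > 1" using p prime_gt_1_nat by blast
  have S0: "0 \<in> S" and Sadd: "\<And>a b. a \<in> S \<Longrightarrow> b \<in> S \<Longrightarrow> a + b \<in> S"
    and Sneg: "\<And>a. a \<in> S \<Longrightarrow> - a \<in> S"
    using S by (auto simp: add_subgroup_def)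
  have T: "s + of_nat j * x \<in> ?T" if "s \<in> S" for s j
  proof -
    have "s + of_nat j * x = f (s, j mod ?p)" by (simp add: f_def of_nat_mod_CHAR)
    thus ?thesis using that p1 by auto
  qed
  show "add_subgroup ?T"
    unfolding add_subgroup_def
  proof (intro conjI ballI)
    show "0 \<in> ?T" using T[OF S0, of 0] by simp
  next
    fix a b assume "a \<in> ?T" "b \<in> ?T"
    then obtain s j s' j' where ab: "a = s + of_nat j * x" "b = s' + of_nat j' * x"
      and "s \<in> S" "s' \<in> S" by (auto simp: f_def)
    hence "a + b = (s + s') + of_nat (j + j') * x" by (simp add: algebra_simps)
    thus "a + b \<in> ?T" using T[OF Sadd[OF \<open>s \<in> S\<close> \<open>s' \<in> S\<close>], of "j + j'"] by metis
  next
    fix a assume "a \<in> ?T"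
    then obtain s j where a: "a = s + of_nat j * x" "s \<in> S" "j < ?p" by (auto simp: f_def)
    have "of_nat (?p - j) = - (of_nat j :: 'a)"
      using a(3) by (simp add: eq_neg_iff_add_eq_0 flip: of_nat_add)
    hence "- a = - s + of_nat (?p - j) * x" by (simp add: a(1))
    thus "- a \<in> ?T" using T[OF Sneg[OF a(2)]] by metis
  qed
  show "inj_on f (S \<times> {..<?p})"
  proof -
    have "j' = j" if "s \<in> S" "s' \<in> S" "j < ?p" "j' \<le> j" and eq: "f (s, j) = f (s', j')" for s s' j j'
    proof (rule ccontr)
      assume "j' \<noteq> j"
      with that have "\<not> ?p dvd (j - j')" by (auto dest: dvd_imp_le)
      moreover have "of_nat (j - j') * x = s' + - s"
        using eq \<open>j' \<le> j\<close> by (simp add: f_def of_nat_diff algebra_simps)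
      hence "of_nat (j - j') * x \<in> S" using Sadd[OF \<open>s' \<in> S\<close> Sneg[OF \<open>s \<in> S\<close>]] by metis
      ultimately show False using add_subgroup_of_nat_mult_cancel[OF p S] x by blast
    qed
    hence "j = j'" if "s \<in> S" "s' \<in> S" "j < ?p" "j' < ?p" "f (s, j) = f (s', j')" for s s' j j'
      using that by (metis nat_le_linear)
    thus ?thesis by (auto intro!: inj_onI simp: f_def) (metis add_right_cancel)
  qed
qed

lemma card_add_subgroup_CHAR_power:
  fixes K :: "'a::ring_1 set"
  assumes p: "Factorial_Ring.prime CHAR('a)" and "finite K" "add_subgroup K"
  shows "\<exists>e. card K = CHAR('a) ^ e"
proof -
  have "\<exists>e. card K = card S * CHAR('a) ^ e" if "add_subgroup S" "S \<subseteq> K" for S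
    using that
  proof (induction "card K - card S" arbitrary: S rule: less_induct)
    case less
    show ?case
    proof (cases "S = K")
      case False
      then obtain x where x: "x \<in> K" "x \<notin> S" using less.prems by blast
      define f where "f = (\<lambda>(s, j). s + of_nat j * x)"
      let ?T = "f ` (S \<times> {..<CHAR('a)})"
      note T = add_subgroup_extend[OF p less.prems(1) x(2), folded f_def]
      have "?T \<subseteq> K"
        using less.prems \<open>add_subgroup K\<close> add_subgroup_of_nat_mult[OF \<open>add_subgroup K\<close> x(1)]
        by (auto simp: f_def add_subgroup_def)
      have "finite S" using less.prems(2) \<open>finite K\<close> finite_subset by blast
      hence card_T: "card ?T = card S * CHAR('a)"
        using T(2) by (simp add: card_image card_cartesian_product)
      moreover have "card S > 0"
        using \<open>finite S\<close> less.prems(1) by (auto simp: add_subgroup_def card_gt_0_iff)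
      moreover have "CHAR('a) > 1" using p prime_gt_1_nat by blast
      ultimately have "card S < card ?T" by simp
      moreover have "card ?T \<le> card K" using \<open>?T \<subseteq> K\<close> \<open>finite K\<close> by (rule card_mono[rotated])
      ultimately have "card K - card ?T < card K - card S" by linarith
      then obtain e where "card K = card ?T * CHAR('a) ^ e"
        using less.hyps[OF _ T(1) \<open>?T \<subseteq> K\<close>] by blast
      thus ?thesis using card_T by (metis mult.assoc power_Suc)
    qed (intro exI[of _ 0], simp)
  qed
  from this[of "{0}"] show ?thesis using assms(3) by (simp add: add_subgroup_def)
qed

definition ring_endo :: "('a::comm_semiring_1 \<Rightarrow> 'a) \<Rightarrow> bool" where
  "ring_endo h \<longleftrightarrow> h 0 = 0 \<and> h 1 = 1 \<and> (\<forall>x y. h (x + y) = h x + h y) \<and> (\<forall>x y. h (x * y) = h x * h y)"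

lemma ring_endoI_surj:
  fixes h :: "'a::comm_ring_1 \<Rightarrow> 'a"
  assumes "surj h" "\<And>x y. h (x + y) = h x + h y" "\<And>x y. h (x * y) = h x * h y"
  shows "ring_endo h"
proof -
  have "h 0 = 0" using assms(2)[of 0 0] by simp
  moreover obtain u where "h u = 1" using assms(1) by (metis surjD)
  hence "h 1 = 1" using assms(3)[of 1 u] by simp
  ultimately show ?thesis using assms(2,3) by (simp add: ring_endo_def)
qed

lemma ring_endo_inj:
  fixes h :: "'a::field \<Rightarrow> 'a"
  assumes "ring_endo h"
  shows "inj h"
proof (rule injI)
  fix x y assume "h x = h y"
  hence "h (x - y) = 0" using assms unfolding ring_endo_def by (metis diff_add_cancel add_right_cancel add_0)
  moreover have "h (x - y) * h (inverse (x - y)) = 1" if "x \<noteq> y"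
    using assms that by (metis ring_endo_def right_inverse right_minus_eq)
  ultimately show "x = y" by force
qed

lemma ring_endo_sum: "ring_endo h \<Longrightarrow> h (sum f A) = (\<Sum>i\<in>A. h (f i))"
  by (induction A rule: infinite_finite_induct) (auto simp: ring_endo_def)

lemma ring_endo_power: "ring_endo h \<Longrightarrow> h (x ^ n) = h x ^ n"
  by (induction n) (auto simp: ring_endo_def)

lemma ring_endo_minus:
  fixes h :: "'a::comm_ring_1 \<Rightarrow> 'a"
  shows "ring_endo h \<Longrightarrow> h (- x) = - h x"
  unfolding ring_endo_def by (metis add.right_inverse add_eq_0_iff2)

lemma ring_endo_CHAR_power:
  assumes "Factorial_Ring.prime CHAR('a::comm_semiring_1)" "n = CHAR('a) ^ e"
  shows "ring_endo (\<lambda>x::'a. x ^ n)"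
proof -
  have "n > 0" using assms by (simp add: prime_gt_0_nat)
  thus ?thesis using freshmans_dream'[OF assms] by (simp add: ring_endo_def power_mult_distrib zero_power)
qed

lemma map_poly_mult_ring_endo:
  assumes "ring_endo h"
  shows "map_poly h (p * r) = map_poly h p * map_poly h r"
proof (rule poly_eqI)
  have "h 0 = 0" using assms by (simp add: ring_endo_def)
  thus "Polynomial.coeff (map_poly h (p * r)) n = Polynomial.coeff (map_poly h p * map_poly h r) n" for n
    using assms by (simp add: coeff_map_poly coeff_mult ring_endo_sum) (simp add: ring_endo_def)
qed

lemma map_poly_prod_ring_endo:
  assumes "ring_endo h"
  shows "map_poly h (\<Prod>i\<in>A. f i) = (\<Prod>i\<in>A. map_poly h (f i))"
proof (induction A rule: infinite_finite_induct)
  case (insert x F)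
  thus ?case by (simp add: map_poly_mult_ring_endo[OF assms])
qed (use assms in \<open>auto simp: ring_endo_def\<close>)

lemma poly_ring_endo_fixed_coeffs:
  assumes "ring_endo h" "\<And>i. h (Polynomial.coeff p i) = Polynomial.coeff p i"
  shows "poly p (h x) = h (poly p x)"
  using assms(2)
proof (induction p)
  case (pCons a p)
  have "h a = a" using pCons.prems[of 0] by simp
  moreover have "poly p (h x) = h (poly p x)" using pCons.IH pCons.prems[of "Suc _"] by simp
  ultimately show ?case using assms(1) by (simp add: ring_endo_def)
qed (use assms(1) in \<open>simp add: ring_endo_def\<close>)

definition aut_over :: "'a::field set \<Rightarrow> ('a \<Rightarrow> 'a) \<Rightarrow> bool" where
  "aut_over K s \<longleftrightarrow> bij s \<and> ring_endo s \<and> (\<forall>k\<in>K. s k = k)"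

lemma lin_code_mult_graph: "lin_code 2 {[x, x * a] | x::'a::field. True}"
  unfolding lin_code_def
proof (intro conjI ballI allI)
  show "replicate 2 0 \<in> {[x, x * a] | x. True}" by (auto simp: numeral_2_eq_2)
next
  fix u v assume "u \<in> {[x, x * a] | x. True}" "v \<in> {[x, x * a] | x. True}"
  then obtain x y where "u = [x, x * a]" "v = [y, y * a]" by blast
  hence "map2 (+) u v = [x + y, (x + y) * a]" by (simp add: distrib_right)
  thus "map2 (+) u v \<in> {[x, x * a] | x. True}" by auto
next
  fix b u assume "u \<in> {[x, x * a] | x. True}"
  then obtain x where "u = [x, x * a]" by blast
  hence "map ((*) b) u = [b * x, (b * x) * a]" by (simp add: mult.assoc)
  thus "map ((*) b) u \<in> {[x, x * a] | x. True}" by auto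
qed auto

lemma lin_code_add: "lin_code n C \<Longrightarrow> u \<in> C \<Longrightarrow> v \<in> C \<Longrightarrow> map2 (+) u v \<in> C"
  by (simp add: lin_code_def)

lemma lin_code_smult: "lin_code n C \<Longrightarrow> u \<in> C \<Longrightarrow> map ((*) b) u \<in> C"
  by (simp add: lin_code_def)

lemma fully_linear_lin_aut_imp_scaled_aut:
  fixes \<phi> :: "'a::field \<Rightarrow> 'a"
  assumes lin: "lin_aut K \<phi>" and full: "fully_linear \<phi>"
  shows "\<phi> 1 \<noteq> 0" and "aut_over K (\<lambda>x. \<phi> x / \<phi> 1)"
proof -
  have bij: "bij \<phi>" and add: "\<And>x y. \<phi> (x + y) = \<phi> x + \<phi> y"
    and K_lin: "\<And>k x. k \<in> K \<Longrightarrow> \<phi> (k * x) = k * \<phi> x"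
    using lin by (auto simp: lin_aut_def)
  have "\<phi> 0 = 0" using add[of 0 0] by (metis add.right_neutral add_left_cancel)
  with bij show c: "\<phi> 1 \<noteq> 0" by (metis bij_is_inj injD one_neq_zero)
  have mult: "\<phi> (x * a) * \<phi> 1 = \<phi> x * \<phi> a" for x a
  proof -
    \<comment> \<open>Rescale the image \<open>(\<phi> 1, \<phi> a)\<close> of the codeword \<open>(1, a)\<close> by \<open>\<phi> x / \<phi> 1\<close>.\<close>
    let ?C = "{[x, x * a] | x. True}"
    have "lin_code 2 (map \<phi> ` ?C)"
      using full lin_code_mult_graph[of a] by (auto simp: fully_linear_def linear_on_code_def)
    moreover have "[\<phi> 1, \<phi> a] \<in> map \<phi> ` ?C" by force
    ultimately have "map ((*) (\<phi> x / \<phi> 1)) [\<phi> 1, \<phi> a] \<in> map \<phi> ` ?C"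
      by (rule lin_code_smult)
    then obtain y where "map ((*) (\<phi> x / \<phi> 1)) [\<phi> 1, \<phi> a] = map \<phi> [y, y * a]"
      by blast
    hence y: "\<phi> x / \<phi> 1 * \<phi> 1 = \<phi> y" "\<phi> x / \<phi> 1 * \<phi> a = \<phi> (y * a)"
      by simp_all
    from y(1) c have "\<phi> y = \<phi> x" by simp
    hence "y = x" using bij by (metis bij_is_inj injD)
    with y(2) show ?thesis using c by (simp add: field_simps)
  qed
  have "surj (\<lambda>x. \<phi> x / \<phi> 1)"
  proof (rule surjI)
    show "\<phi> (inv_into UNIV \<phi> (y * \<phi> 1)) / \<phi> 1 = y" for y
      using bij c by (simp add: bij_is_surj surj_f_inv_f)
  qed
  moreover have "\<phi> (x * y) / \<phi> 1 = \<phi> x / \<phi> 1 * (\<phi> y / \<phi> 1)" for x y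
    using mult[of x y] c by (simp add: field_simps)
  ultimately have "ring_endo (\<lambda>x. \<phi> x / \<phi> 1)"
    by (intro ring_endoI_surj) (simp_all add: add add_divide_distrib)
  thus "aut_over K (\<lambda>x. \<phi> x / \<phi> 1)"
    using \<open>surj _\<close> c K_lin[of _ 1] ring_endo_inj by (auto simp: aut_over_def bij_def)
qed

lemma lin_code_map_scaled_aut:
  fixes s :: "'a::field \<Rightarrow> 'a"
  assumes s: "surj s" "ring_endo s" and C: "lin_code n C"
  shows "lin_code n (map (\<lambda>x. c * s x) ` C)"
  unfolding lin_code_def
proof (intro conjI ballI allI)
  let ?f = "map (\<lambda>x. c * s x)"
  have "s 0 = 0" using s(2) by (simp add: ring_endo_def)
  show "?f ` C \<subseteq> {v. length v = n}" using C by (auto simp: lin_code_def)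
  have "?f (replicate n 0) = replicate n 0" by (simp add: \<open>s 0 = 0\<close>)
  thus "replicate n 0 \<in> ?f ` C" using C unfolding lin_code_def by (metis image_eqI)
next
  fix u v assume "u \<in> map (\<lambda>x. c * s x) ` C" "v \<in> map (\<lambda>x. c * s x) ` C"
  then obtain u' v' where "u' \<in> C" "v' \<in> C" "u = map (\<lambda>x. c * s x) u'" "v = map (\<lambda>x. c * s x) v'"
    by auto
  moreover have "map2 (+) (map (\<lambda>x. c * s x) u') (map (\<lambda>x. c * s x) v') = map (\<lambda>x. c * s x) (map2 (+) u' v')"
    using s(2) by (simp add: zip_map_map case_prod_beta ring_endo_def distrib_left)
  moreover have "map2 (+) u' v' \<in> C" using C \<open>u' \<in> C\<close> \<open>v' \<in> C\<close> by (rule lin_code_add)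
  ultimately show "map2 (+) u v \<in> map (\<lambda>x. c * s x) ` C" by (metis image_eqI)
next
  fix b u assume "u \<in> map (\<lambda>x. c * s x) ` C"
  then obtain u' where "u' \<in> C" "u = map (\<lambda>x. c * s x) u'" by auto
  moreover obtain b' where "s b' = b" using s(1) by (metis surjD)
  hence "map ((*) b) (map (\<lambda>x. c * s x) u') = map (\<lambda>x. c * s x) (map ((*) b') u')"
    using s(2) by (auto simp: ring_endo_def algebra_simps)
  moreover have "map ((*) b') u' \<in> C" using C \<open>u' \<in> C\<close> by (rule lin_code_smult)
  ultimately show "map ((*) b) u \<in> map (\<lambda>x. c * s x) ` C" by (metis image_eqI)
qed

lemma scaled_aut_lin_aut_fully_linear:
  fixes s :: "'a::field \<Rightarrow> 'a"
  assumes s: "aut_over K s" and c: "c \<noteq> 0"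
  shows "lin_aut K (\<lambda>x. c * s x)" and "fully_linear (\<lambda>x. c * s x)"
proof -
  have inj: "inj s" and surj: "surj s" and endo: "ring_endo s" and fixes_K: "\<And>k. k \<in> K \<Longrightarrow> s k = k"
    using s by (auto simp: aut_over_def bij_def)
  have "bij (\<lambda>x. c * s x)"
  proof (rule bijI)
    show "inj (\<lambda>x. c * s x)" using inj c by (simp add: inj_def)
    have "y = c * s (inv_into UNIV s (y / c))" for y using surj c by (simp add: surj_f_inv_f)
    thus "surj (\<lambda>x. c * s x)" by blast
  qed
  moreover have "c * s (x + y) = c * s x + c * s y" for x y
    using endo by (simp add: ring_endo_def algebra_simps)
  moreover have "c * s (k * x) = k * (c * s x)" if "k \<in> K" for k x
    using endo fixes_K[OF that] by (simp add: ring_endo_def algebra_simps)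
  ultimately show "lin_aut K (\<lambda>x. c * s x)" by (simp add: lin_aut_def)
  show "fully_linear (\<lambda>x. c * s x)"
    using lin_code_map_scaled_aut[OF surj endo] by (simp add: fully_linear_def linear_on_code_def)
qed

lemma bij_betw_scaled_aut_fully_linear:
  "bij_betw (\<lambda>(c, s) x. c * s x) ((UNIV - {0}) \<times> Collect (aut_over K))
     {\<phi> :: 'a::field \<Rightarrow> 'a. lin_aut K \<phi> \<and> fully_linear \<phi>}"
proof (rule bij_betw_imageI)
  show "inj_on (\<lambda>(c, s) x. c * s x) ((UNIV - {0}) \<times> Collect (aut_over K))"
  proof (rule inj_onI)
    fix a b assume "a \<in> (UNIV - {0}) \<times> Collect (aut_over K)" "b \<in> (UNIV - {0}) \<times> Collect (aut_over K)"
      and eq: "(\<lambda>(c, s) x. c * s x) a = (\<lambda>(c, s) x. c * s x) b"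
    moreover obtain c s c' s' where ab: "a = (c, s)" "b = (c', s')" by fastforce
    ultimately have "c \<noteq> 0" "s 1 = 1" "s' 1 = 1" by (auto simp: aut_over_def ring_endo_def)
    have eq': "c * s x = c' * s' x" for x using eq ab by (simp add: fun_eq_iff)
    hence "c = c'" using eq'[of 1] \<open>s 1 = 1\<close> \<open>s' 1 = 1\<close> by simp
    with eq' \<open>c \<noteq> 0\<close> have "s = s'" by (simp add: fun_eq_iff)
    with \<open>c = c'\<close> ab show "a = b" by simp
  qed
  show "(\<lambda>(c, s) x. c * s x) ` ((UNIV - {0}) \<times> Collect (aut_over K))
    = {\<phi>. lin_aut K \<phi> \<and> fully_linear \<phi>}"
  proof (intro equalityI subsetI)
    fix \<phi> assume "\<phi> \<in> {\<phi>. lin_aut K \<phi> \<and> fully_linear \<phi>}"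
    hence "\<phi> 1 \<noteq> 0" "aut_over K (\<lambda>x. \<phi> x / \<phi> 1)"
      using fully_linear_lin_aut_imp_scaled_aut by auto
    moreover from this(1) have "\<phi> = (\<lambda>x. \<phi> 1 * (\<phi> x / \<phi> 1))" by simp
    ultimately show "\<phi> \<in> (\<lambda>(c, s) x. c * s x) ` ((UNIV - {0}) \<times> Collect (aut_over K))"
      by (auto intro!: image_eqI[of _ _ "(\<phi> 1, \<lambda>x. \<phi> x / \<phi> 1)"])
  qed (use scaled_aut_lin_aut_fully_linear in auto)
qed

lemma finite_field_mult_generator:
  obtains \<alpha> :: "'a::{field,finite}" where "\<And>x. x \<noteq> 0 \<Longrightarrow> \<exists>i. x = \<alpha> ^ i"
proof -
  define R :: "'a ring" where "R = \<lparr>carrier = UNIV, monoid.mult = (*), one = 1, zero = 0, add = (+)\<rparr>"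
  have "field R"
  proof -
    have "\<exists>y. x + y = 0" "x \<noteq> 0 \<Longrightarrow> \<exists>y. x * y = 1" for x :: 'a
      by (metis add.right_inverse, metis right_inverse)
    thus ?thesis
      unfolding R_def by unfold_locales (auto simp: algebra_simps Units_def)
  qed
  then obtain \<alpha> where "carrier (mult_of R) = {\<alpha> [^]\<^bsub>R\<^esub> i | i::nat. i \<in> UNIV}"
    using field.finite_field_mult_group_has_gen[of R] by (auto simp: R_def)
  moreover have "\<alpha> [^]\<^bsub>R\<^esub> (i::nat) = \<alpha> ^ i" for i
    by (induction i) (auto simp: R_def)
  ultimately have "UNIV - {0} = {\<alpha> ^ i | i. True}" by (simp add: R_def)
  thus ?thesis using that by blast
qed

lemma power_card_subfield:
  fixes K :: "'a::field set"
  assumes "is_subfield K" "finite K" "x \<in> K"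
  shows "x ^ card K = x"
proof (cases "x = 0")
  case True
  have "card K > 0" using assms(1,2) by (auto simp: is_subfield_def card_gt_0_iff)
  thus ?thesis using True by simp
next
  case False
  let ?U = "K - {0}"
  have mult: "x * y \<in> K" "y / x \<in> K" if "y \<in> K" for y
    using assms(1) that \<open>x \<in> K\<close> False by (auto simp: is_subfield_def divide_inverse)
  have "(\<Prod>y\<in>?U. x * y) = (\<Prod>y\<in>?U. y)"
    by (rule prod.reindex_bij_witness[of _ "\<lambda>y. y / x" "\<lambda>y. x * y"]) (use False mult in auto)
  moreover have "\<Prod>?U \<noteq> 0" using assms(2) by simp
  ultimately have "x ^ card ?U = 1" by (simp add: prod.distrib)
  moreover have "card K = Suc (card ?U)"
    using assms card_Suc_Diff1[of K 0] by (simp add: is_subfield_def)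
  ultimately show ?thesis by simp
qed

lemma card_subfield_ge_2:
  fixes K :: "'a::field set"
  assumes "is_subfield K" "finite K"
  shows "card K \<ge> 2"
proof -
  have "card {0, 1::'a} \<le> card K" using assms by (intro card_mono) (auto simp: is_subfield_def)
  thus ?thesis by simp
qed

lemma card_power_eq_self_le:
  assumes "n \<ge> 2"
  shows "card {x::'a::idom. x ^ n = x} \<le> n"
proof -
  define P :: "'a poly" where "P = Polynomial.monom 1 n - [:0, 1:]"
  have "Polynomial.coeff P n = 1" using assms by (simp add: P_def coeff_pCons split: nat.split)
  hence "P \<noteq> 0" by auto
  moreover have "degree P \<le> n"
    unfolding P_def using assms by (intro degree_diff_le) (auto simp: degree_monom_le)
  moreover have "{x. x ^ n = x} = {x. poly P x = 0}" by (auto simp: P_def poly_monom)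
  ultimately show ?thesis using card_poly_roots_bound[of P] by simp
qed

lemma subfield_eq_fixed_points:
  fixes K :: "'a::{field,finite} set"
  assumes "is_subfield K"
  shows "K = {x. x ^ card K = x}"
proof -
  have "K \<subseteq> {x. x ^ card K = x}" using power_card_subfield[OF assms finite] by blast
  moreover have "card {x::'a. x ^ card K = x} \<le> card K"
    using card_subfield_ge_2[OF assms finite] by (rule card_power_eq_self_le)
  ultimately show ?thesis by (intro card_seteq) simp_all
qed

lemma prod_lessThan_Suc_rotate:
  fixes f :: "nat \<Rightarrow> 'a::comm_monoid_mult"
  assumes "f n = f 0"
  shows "(\<Prod>i<n. f (Suc i)) = (\<Prod>i<n. f i)"
proof (cases n)
  case (Suc k)
  have "(\<Prod>i<Suc k. f (Suc i)) = (\<Prod>i<k. f (Suc i)) * f 0" using assms Suc by simp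
  also have "\<dots> = (\<Prod>i<Suc k. f i)" by (simp add: prod.lessThan_Suc_shift mult.commute del: prod.lessThan_Suc)
  finally show ?thesis using Suc by simp
qed simp

locale finite_field_extension =
  fixes K :: "'a::{field,finite} set" and q m :: nat
  assumes subfield: "is_subfield K" and card_K: "card K = q" and card_UNIV: "card (UNIV :: 'a set) = q ^ m"
begin

lemma q_ge_2: "q \<ge> 2"
  using card_subfield_ge_2[OF subfield finite] card_K by simp

lemma m_pos: "m > 0"
  using card_UNIV card_K card_mono[of UNIV K] q_ge_2 by (cases m) auto

lemma q_CHAR_power: "\<exists>e. q = CHAR('a) ^ e"
proof -
  have "Factorial_Ring.prime CHAR('a)" by (simp add: finite_imp_CHAR_pos prime_CHAR_semidom)
  moreover have "add_subgroup K" using subfield by (simp add: is_subfield_def add_subgroup_def)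
  ultimately show ?thesis using card_add_subgroup_CHAR_power[of K] card_K by auto
qed

lemma ring_endo_frobenius: "ring_endo (\<lambda>x::'a. x ^ q ^ i)"
proof -
  obtain e where "q = CHAR('a) ^ e" using q_CHAR_power by blast
  hence "q ^ i = CHAR('a) ^ (e * i)" by (simp add: power_mult)
  thus ?thesis by (intro ring_endo_CHAR_power) (simp_all add: finite_imp_CHAR_pos prime_CHAR_semidom)
qed

lemma aut_over_frobenius: "aut_over K (\<lambda>x. x ^ q ^ i)"
proof -
  have "inj (\<lambda>x::'a. x ^ q ^ i)" by (rule ring_endo_inj[OF ring_endo_frobenius])
  hence "bij (\<lambda>x::'a. x ^ q ^ i)" by (simp add: bij_def finite_UNIV_inj_surj)
  moreover have "k ^ q ^ i = k" if "k \<in> K" for k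
  proof -
    have "k ^ q = k" using power_card_subfield[OF subfield _ that] card_K by simp
    thus ?thesis by (induction i) (simp_all add: power_mult)
  qed
  ultimately show ?thesis using ring_endo_frobenius by (simp add: aut_over_def)
qed

lemma frobenius_power_nontrivial:
  assumes "0 < d" "d < m"
  shows "\<exists>x::'a. x ^ q ^ d \<noteq> x"
proof -
  have "q ^ d \<ge> 2" using q_ge_2 self_le_power[of q d] assms(1) by linarith
  hence "card {x::'a. x ^ q ^ d = x} \<le> q ^ d" by (rule card_power_eq_self_le)
  also have "\<dots> < card (UNIV :: 'a set)" using card_UNIV q_ge_2 assms(2) by simp
  finally have "{x::'a. x ^ q ^ d = x} \<noteq> UNIV" by auto
  thus ?thesis by auto
qed

lemma inj_on_frobenius_powers: "inj_on (\<lambda>i x::'a. x ^ q ^ i) {..<m}"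
proof -
  have False if "i < j" "j < m" and eq: "(\<lambda>x::'a. x ^ q ^ i) = (\<lambda>x. x ^ q ^ j)" for i j
  proof -
    have "(x ^ q ^ (j - i)) ^ q ^ i = x ^ q ^ i" for x :: 'a
      using fun_cong[OF eq, of x] \<open>i < j\<close> by (simp flip: power_mult power_add)
    hence "x ^ q ^ (j - i) = x" for x :: 'a
      using ring_endo_inj[OF ring_endo_frobenius, of i] by (meson injD)
    moreover have "j - i < m" using that by simp
    ultimately show False using frobenius_power_nontrivial[of "j - i"] \<open>i < j\<close> by auto
  qed
  thus ?thesis unfolding inj_on_def by (metis lessThan_iff linorder_neqE_nat)
qed

text \<open>The Frobenius \<open>x \<mapsto> x\<^sup>q\<close> permutes the factors cyclically, so it fixes every coefficient.\<close>

lemma coeff_conjugates_poly_in_subfield: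
  "Polynomial.coeff (\<Prod>i<m. [:- (a ^ q ^ i), 1:]) k \<in> K"
proof -
  let ?g = "\<Prod>i<m. [:- (a ^ q ^ i), 1:]"
  have frob: "ring_endo (\<lambda>x::'a. x ^ q)" using ring_endo_frobenius[of 1] by simp
  have "a ^ q ^ m = a" using power_card_subfield[of UNIV a] card_UNIV by (simp add: is_subfield_def)
  have "map_poly (\<lambda>x. x ^ q) [:- (a ^ q ^ i), 1:] = [:- (a ^ q ^ Suc i), 1:]" for i
    using q_ge_2 ring_endo_minus[OF frob] by (simp add: map_poly_pCons mult.commute flip: power_mult)
  hence "map_poly (\<lambda>x. x ^ q) ?g = (\<Prod>i<m. [:- (a ^ q ^ Suc i), 1:])"
    by (simp add: map_poly_prod_ring_endo[OF frob])
  also have "\<dots> = ?g" using \<open>a ^ q ^ m = a\<close> by (intro prod_lessThan_Suc_rotate) simp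
  moreover have "(0::'a) ^ q = 0" using q_ge_2 by simp
  ultimately have "Polynomial.coeff ?g k ^ q = Polynomial.coeff ?g k"
    by (metis coeff_map_poly)
  thus ?thesis using subfield_eq_fixed_points[OF subfield] card_K by blast
qed

lemma aut_over_imp_frobenius:
  assumes "aut_over K s"
  shows "\<exists>i<m. s = (\<lambda>x. x ^ q ^ i)"
proof -
  have endo: "ring_endo s" and fixes_K: "\<And>k. k \<in> K \<Longrightarrow> s k = k"
    using assms by (auto simp: aut_over_def)
  obtain \<alpha> :: 'a where gen: "\<And>x. x \<noteq> 0 \<Longrightarrow> \<exists>j. x = \<alpha> ^ j"
    using finite_field_mult_generator by blast
  let ?g = "\<Prod>i<m. [:- (\<alpha> ^ q ^ i), 1:]"
  have "poly ?g \<alpha> = 0" using m_pos by (auto simp: poly_prod intro!: bexI[of _ 0])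
  hence "poly ?g (s \<alpha>) = 0"
    using poly_ring_endo_fixed_coeffs[OF endo fixes_K[OF coeff_conjugates_poly_in_subfield]] endo
    by (simp add: ring_endo_def)
  then obtain i where "i < m" and s\<alpha>: "s \<alpha> = \<alpha> ^ q ^ i" by (auto simp: poly_prod)
  have "s x = x ^ q ^ i" for x
  proof (cases "x = 0")
    case True
    thus ?thesis using endo q_ge_2 by (simp add: ring_endo_def)
  next
    case False
    then obtain j where "x = \<alpha> ^ j" using gen by blast
    thus ?thesis using s\<alpha> ring_endo_power[OF endo] by (simp flip: power_mult add: mult.commute)
  qed
  thus ?thesis using \<open>i < m\<close> by blast
qed

lemma card_aut_over: "card (Collect (aut_over K)) = m"
proof -
  have "Collect (aut_over K) = (\<lambda>i x. x ^ q ^ i) ` {..<m}"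
    using aut_over_imp_frobenius aut_over_frobenius by auto
  thus ?thesis using card_image[OF inj_on_frobenius_powers] by simp
qed

end

theorem theorem2:
  fixes K :: "'a::{field,finite} set" and q m :: nat
  assumes "is_subfield K" and "card K = q" and "card (UNIV :: 'a set) = q ^ m"
  shows "card {phi :: 'a \<Rightarrow> 'a. lin_aut K phi \<and> fully_linear phi} = m * (q ^ m - 1)"
proof -
  interpret finite_field_extension K q m by unfold_locales fact+
  have "card {phi :: 'a \<Rightarrow> 'a. lin_aut K phi \<and> fully_linear phi}
      = card ((UNIV - {0 :: 'a}) \<times> Collect (aut_over K))"
    by (rule bij_betw_same_card[OF bij_betw_scaled_aut_fully_linear, symmetric])
  also have "\<dots> = (q ^ m - 1) * m"
    using card_UNIV card_aut_over by (simp add: card_cartesian_product card_Diff_singleton)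
  finally show ?thesis by simp
qed

end
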